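(* Let $\mathcal{B}$ be an associative algebra over $\mathbb{C}$, let $\mathcal{A}$ denote the set of all matrices (of arbitrary finite sizes) with entries in $\mathcal{B}$, with the convention that the product of two matrices is defined to be zero if their sizes do not match, and let $\Omega = \mathcal{A}\otimes\bigwedge(\mathbb{C}^2)$. Suppose $(\Omega,\mathrm{d},\bar{\mathrm{d}})$ is a bidifferential calculus. Fix positive integers $n,N,N'$. Let $\boldsymbol{P},\boldsymbol{R}\in\mathrm{Mat}(N,N,\mathcal{B})$, $\tilde{\boldsymbol{U}}\in\mathrm{Mat}(n,N',\mathcal{B})$ and $\tilde{\boldsymbol{V}}\in\mathrm{Mat}(N,n,\mathcal{B})$ be both $\mathrm{d}$-constant and $\bar{\mathrm{d}}$-constant, and put $\boldsymbol{Q}=\tilde{\boldsymbol{V}}\tilde{\boldsymbol{U}}$. Let $\boldsymbol{X}\in\mathrm{Mat}(N,N,\mathcal{B})$ and $\boldsymbol{Y}\in\mathrm{Mat}(N',N,\mathcal{B})$ satisfy $$\bar{\mathrm{d}}\boldsymbol{X}=(\mathrm{d}\boldsymbol{X})\,\boldsymbol{P},\qquad \bar{\mathrm{d}}\boldsymbol{Y}=(\mathrm{d}\boldsymbol{Y})\,\boldsymbol{P},\qquad \boldsymbol{R}\boldsymbol{X}-\boldsymbol{X}\boldsymbol{P}=-\boldsymbol{Q}\boldsymbol{Y}.$$ If $\boldsymbol{X}$ is invertible, then $\phi=\tilde{\boldsymbol{U}}\boldsymbol{Y}\boldsymbol{X}^{-1}\tilde{\boldsymbol{V}}\in\mathrm{Mat}(n,n,\mathcal{B})$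 satisfies $$\bar{\mathrm{d}}\phi=(\mathrm{d}\phi)\,\phi+\mathrm{d}\vartheta\qquad\text{with}\qquad \vartheta=\tilde{\boldsymbol{U}}\boldsymbol{Y}\boldsymbol{X}^{-1}\boldsymbol{R}\tilde{\boldsymbol{V}},$$ and consequently $\bar{\mathrm{d}}\,\mathrm{d}\,\phi=\mathrm{d}\phi\;\mathrm{d}\phi$.
   Context: A graded algebra is an associative algebra $\Omega$ over $\mathbb{C}$ with a decomposition $\Omega=\bigoplus_{r\ge0}\Omega^r$ into a subalgebra $\Omega^0$ and $\Omega^0$-bimodules $\Omega^r$ with $\Omega^r\Omega^s\subseteq\Omega^{r+s}$; here $\Omega^r=\mathcal{A}\otimes\bigwedge^r(\mathbb{C}^2)$. A bidifferential calculus is a unital graded algebra $\Omega$ with two $\mathbb{C}$-linear maps $\mathrm{d},\bar{\mathrm{d}}:\Omega\to\Omega$ of degree one (mapping $\Omega^r$ into $\Omega^{r+1}$) such that, for every $z\in\mathbb{C}$, $\mathrm{d}_z:=\bar{\mathrm{d}}-z\,\mathrm{d}$ satisfies $\mathrm{d}_z^2=0$ and the graded Leibniz rule $\mathrm{d}_z(\chi\chi')=(\mathrm{d}_z\chi)\chi'+(-1)^r\chi\,\mathrm{d}_z\chi'$ for $\chi\in\Omega^r$, $\chi'\in\Omega$ (equivalently: $\mathrm{d},\bar{\mathrm{d}}$ are graded derivations with $\mathrm{d}^2=\bar{\mathrm{d}}^2=\mathrm{d}\bar{\mathrm{d}}+\bar{\mathrm{d}}\mathrm{d}=0$). Here $\mathrm{d}$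 and $\bar{\mathrm{d}}$ act on matrices of all sizes over $\mathcal{B}$, and the Leibniz rule holds for all products of matrices of compatible sizes. An element $\chi$ is called $\mathrm{d}$-constant if $\mathrm{d}\chi=0$ and $\bar{\mathrm{d}}$-constant if $\bar{\mathrm{d}}\chi=0$. *)

theory Defs
  imports Complex_Main "Jordan_Normal_Form.Matrix"
begin

text \<open>A homogeneous element of degree 0 of size r x c is a matrix in carrier_mat r c;
  a degree-1 element  a (x) xi1 + b (x) xi2  is the pair (a,b) of matrices of equal size;
  a degree-2 element  m (x) xi1 xi2  is the matrix m.  Omega^3 = 0.\<close>

type_synonym 'b form1 = "'b mat \<times> 'b mat"

definition wf1 :: "nat \<Rightarrow> nat \<Rightarrow> 'b form1 \<Rightarrow> bool" where
  "wf1 r c w \<longleftrightarrow> fst w \<in> carrier_mat r c \<and> snd w \<in> carrier_mat r c"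

definition add1 :: "'b::plus form1 \<Rightarrow> 'b form1 \<Rightarrow> 'b form1" where
  "add1 w v = (fst w + fst v, snd w + snd v)"

definition lmul1 :: "'b::semiring_0 mat \<Rightarrow> 'b form1 \<Rightarrow> 'b form1" where
  "lmul1 A w = (A * fst w, A * snd w)"

definition rmul1 :: "'b::semiring_0 form1 \<Rightarrow> 'b mat \<Rightarrow> 'b form1" where
  "rmul1 w B = (fst w * B, snd w * B)"

text \<open>product of two 1-forms: coefficient of xi1 xi2\<close>
definition wedge :: "'b::ring form1 \<Rightarrow> 'b form1 \<Rightarrow> 'b mat" where
  "wedge w v = fst w * snd v - snd w * fst v"

text \<open>B is a unital associative C-algebra: a unital ring with a ring homomorphism
  from C into its centre (scalar multiplication  c x = emb c * x).\<close>
definition complex_algebra :: "(complex \<Rightarrow> 'b::ring_1) \<Rightarrow> bool" where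
  "complex_algebra emb \<longleftrightarrow> emb 1 = 1 \<and> (\<forall>a b. emb (a + b) = emb a + emb b)
     \<and> (\<forall>a b. emb (a * b) = emb a * emb b) \<and> (\<forall>c x. emb c * x = x * emb c)"

text \<open>A C-linear, size-preserving map of degree one (D0 on Omega^0, D1 on Omega^1;
  it vanishes on Omega^2 since Omega^3 = 0) satisfying the graded Leibniz rule
  for all products of matrices of compatible sizes.\<close>
definition graded_derivation ::
  "(complex \<Rightarrow> 'b::ring_1) \<Rightarrow> ('b mat \<Rightarrow> 'b form1) \<Rightarrow> ('b form1 \<Rightarrow> 'b mat) \<Rightarrow> bool" where
  "graded_derivation emb D0 D1 \<longleftrightarrow>
     (\<forall>A. wf1 (dim_row A) (dim_col A) (D0 A))
   \<and> (\<forall>r c w. wf1 r c w \<longrightarrow> D1 w \<in> carrier_mat r c)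
   \<and> (\<forall>r c A B. A \<in> carrier_mat r c \<longrightarrow> B \<in> carrier_mat r c \<longrightarrow>
        D0 (A + B) = add1 (D0 A) (D0 B))
   \<and> (\<forall>r c w v. wf1 r c w \<longrightarrow> wf1 r c v \<longrightarrow> D1 (add1 w v) = D1 w + D1 v)
   \<and> (\<forall>c A. D0 (emb c \<cdot>\<^sub>m A) = (emb c \<cdot>\<^sub>m fst (D0 A), emb c \<cdot>\<^sub>m snd (D0 A)))
   \<and> (\<forall>c w. D1 (emb c \<cdot>\<^sub>m fst w, emb c \<cdot>\<^sub>m snd w) = emb c \<cdot>\<^sub>m D1 w)
   \<and> (\<forall>r k c A B. A \<in> carrier_mat r k \<longrightarrow> B \<in> carrier_mat k c \<longrightarrow>
        D0 (A * B) = add1 (rmul1 (D0 A) B) (lmul1 A (D0 B)))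
   \<and> (\<forall>r k c A w. A \<in> carrier_mat r k \<longrightarrow> wf1 k c w \<longrightarrow>
        D1 (lmul1 A w) = wedge (D0 A) w + A * D1 w)
   \<and> (\<forall>r k c w B. wf1 r k w \<longrightarrow> B \<in> carrier_mat k c \<longrightarrow>
        D1 (rmul1 w B) = D1 w * B - wedge w (D0 B))"

text \<open>Bidifferential calculus: d, dbar graded derivations with
  d^2 = dbar^2 = d dbar + dbar d = 0 (equivalently d_z = dbar - z d satisfies
  d_z^2 = 0 and the Leibniz rule for all z).\<close>
definition bidiff_calculus ::
  "(complex \<Rightarrow> 'b::ring_1) \<Rightarrow> ('b mat \<Rightarrow> 'b form1) \<Rightarrow> ('b form1 \<Rightarrow> 'b mat)
     \<Rightarrow> ('b mat \<Rightarrow> 'b form1) \<Rightarrow> ('b form1 \<Rightarrow> 'b mat) \<Rightarrow> bool" where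
  "bidiff_calculus emb d0 d1 db0 db1 \<longleftrightarrow>
     graded_derivation emb d0 d1 \<and> graded_derivation emb db0 db1
   \<and> (\<forall>A. d1 (d0 A) = 0\<^sub>m (dim_row A) (dim_col A))
   \<and> (\<forall>A. db1 (db0 A) = 0\<^sub>m (dim_row A) (dim_col A))
   \<and> (\<forall>A. d1 (db0 A) + db1 (d0 A) = 0\<^sub>m (dim_row A) (dim_col A))"

end

theory Submission
  imports Defs
begin

(* A degree-one form is a pair of matrices, so the xi1- and xi2-coefficients of d and
   dbar restricted to matrices are ordinary derivations of the matrix algebra (the
   locale mat_derivation).  The first claim is therefore proved separately for each
   pair of components delta (from d) and eps (from dbar).  The key tool is a quotient
   rule: from eps = delta * P on X and on Y one gets, for Z = U Y X^-1,
   eps Z = delta Z * X P X^-1.  Combined with the Sylvester equation in the form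
   V U Y X^-1 + R = X P X^-1 this yields the potential equation.  The second claim,
   dbar d phi = d phi d phi, is derived from the potential equation alone, using
   d^2 = 0, the Leibniz rule for d on Omega^1 and d dbar + dbar d = 0. *)

(* Associativity of matrix multiplication, phrased with dimension equalities so
   that the simplifier can discharge its side conditions. *)
lemma assoc_mult_mat_dim:
  "dim_col A = dim_row B \<Longrightarrow> dim_col B = dim_row C \<Longrightarrow> A * B * C = A * (B * C)"
  by (rule assoc_mult_mat[of A "dim_row A" "dim_col A" B "dim_col B" C "dim_col C"]) auto

lemma add_right_cancel_mat:
  fixes A B C :: "'a::group_add mat"
  assumes "A + C = B + C"
    and "A \<in> carrier_mat r c" "B \<in> carrier_mat r c" "C \<in> carrier_mat r c"
  shows "A = B"
proof (rule eq_matI)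
  fix i j assume ij: "i < dim_row B" "j < dim_col B"
  have "(A + C) $$ (i, j) = (B + C) $$ (i, j)" using assms(1) by simp
  then show "A $$ (i, j) = B $$ (i, j)" using ij assms(2-4) by simp
qed (use assms in auto)

lemma diff_eq_uminus_imp_add_eq_mat:
  fixes A B C :: "'a::group_add mat"
  assumes "A - B = - C"
    and "A \<in> carrier_mat r c" "B \<in> carrier_mat r c" "C \<in> carrier_mat r c"
  shows "C + A = B"
proof (rule eq_matI)
  fix i j assume ij: "i < dim_row B" "j < dim_col B"
  have "(A - B) $$ (i, j) = (- C) $$ (i, j)" using assms(1) by simp
  then show "(C + A) $$ (i, j) = B $$ (i, j)" using ij assms(2-4)
    by (simp add: diff_eq_eq add.assoc[symmetric])
qed (use assms in auto)

lemma uminus_add_eq_zero_mat: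
  fixes A B :: "'a::group_add mat"
  assumes "- A + B = 0\<^sub>m r c" and "A \<in> carrier_mat r c" "B \<in> carrier_mat r c"
  shows "B = A"
proof (rule eq_matI)
  fix i j assume ij: "i < dim_row A" "j < dim_col A"
  have "(- A + B) $$ (i, j) = 0\<^sub>m r c $$ (i, j)" using assms(1) by simp
  then show "B $$ (i, j) = A $$ (i, j)" using ij assms(2,3) by (simp add: add_eq_0_iff)
qed (use assms in auto)

(* Every component of the
   degree-one part of d or dbar is such a map. *)
locale mat_derivation =
  fixes \<delta> :: "'b::ring_1 mat \<Rightarrow> 'b mat"
  assumes carrier: "A \<in> carrier_mat r c \<Longrightarrow> \<delta> A \<in> carrier_mat r c"
    and leibniz: "A \<in> carrier_mat r k \<Longrightarrow> B \<in> carrier_mat k c \<Longrightarrow> \<delta> (A * B) = \<delta> A * B + A * \<delta> B"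
begin

lemma const_left:
  assumes "A \<in> carrier_mat r k" "B \<in> carrier_mat k c" "\<delta> A = 0\<^sub>m r k"
  shows "\<delta> (A * B) = A * \<delta> B"
  using assms leibniz[OF assms(1,2)] carrier[OF assms(2)] by simp

lemma const_right:
  assumes "A \<in> carrier_mat r k" "B \<in> carrier_mat k c" "\<delta> B = 0\<^sub>m k c"
  shows "\<delta> (A * B) = \<delta> A * B"
  using assms leibniz[OF assms(1,2)] carrier[OF assms(1)] by simp

end

lemma graded_derivation_degree_one:
  assumes "graded_derivation emb D0 D1"
  shows "wf1 (dim_row A) (dim_col A) (D0 A)"
    and "wf1 r c w \<Longrightarrow> D1 w \<in> carrier_mat r c"
    and "wf1 r c w \<Longrightarrow> wf1 r c v \<Longrightarrow> D1 (add1 w v) = D1 w + D1 v"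
    and "wf1 r k w \<Longrightarrow> B \<in> carrier_mat k c \<Longrightarrow> D1 (rmul1 w B) = D1 w * B - wedge w (D0 B)"
  using assms unfolding graded_derivation_def by (simp_all del: split_paired_All)

lemma bidiff_calculus_parts:
  assumes "bidiff_calculus emb d0 d1 db0 db1"
  shows "graded_derivation emb d0 d1" "graded_derivation emb db0 db1"
    and "d1 (d0 A) = 0\<^sub>m (dim_row A) (dim_col A)"
    and "d1 (db0 A) + db1 (d0 A) = 0\<^sub>m (dim_row A) (dim_col A)"
  using assms unfolding bidiff_calculus_def by simp_all

lemma graded_derivation_components:
  assumes "graded_derivation emb D0 D1"
  shows "mat_derivation (\<lambda>A. fst (D0 A))" and "mat_derivation (\<lambda>A. snd (D0 A))"
proof -
  note wf = graded_derivation_degree_one(1)[OF assms]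
  have pr: "D0 (A * B) = add1 (rmul1 (D0 A) B) (lmul1 A (D0 B))"
    if "A \<in> carrier_mat r k" "B \<in> carrier_mat k c" for A B r k c
    using assms that unfolding graded_derivation_def by simp
  show "mat_derivation (\<lambda>A. fst (D0 A))"
  proof
    show "fst (D0 A) \<in> carrier_mat r c" if "A \<in> carrier_mat r c" for A r c
      using that wf[of A] by (auto simp: wf1_def)
    show "fst (D0 (A * B)) = fst (D0 A) * B + A * fst (D0 B)"
      if "A \<in> carrier_mat r k" "B \<in> carrier_mat k c" for A B r k c
      using pr[OF that] by (simp add: add1_def rmul1_def lmul1_def)
  qed
  show "mat_derivation (\<lambda>A. snd (D0 A))"
  proof
    show "snd (D0 A) \<in> carrier_mat r c" if "A \<in> carrier_mat r c" for A r c
      using that wf[of A] by (auto simp: wf1_def)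
    show "snd (D0 (A * B)) = snd (D0 A) * B + A * snd (D0 B)"
      if "A \<in> carrier_mat r k" "B \<in> carrier_mat k c" for A B r k c
      using pr[OF that] by (simp add: add1_def rmul1_def lmul1_def)
  qed
qed

(* No formula for the derivative
   of X^-1 is needed: differentiate Z X and cancel the common term Z (delta X) P. *)
lemma right_quotient_rule:
  assumes \<delta>: "mat_derivation \<delta>" and \<epsilon>: "mat_derivation \<epsilon>"
    and X: "X \<in> carrier_mat N N" and Xinv: "Xinv \<in> carrier_mat N N" and inv: "X * Xinv = 1\<^sub>m N"
    and P: "P \<in> carrier_mat N N" and Z: "Z \<in> carrier_mat m N"
    and eX: "\<epsilon> X = \<delta> X * P" and eZX: "\<epsilon> (Z * X) = \<delta> (Z * X) * P"
  shows "\<epsilon> Z = \<delta> Z * (X * P * Xinv)"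
proof -
  interpret d: mat_derivation \<delta> by (rule \<delta>)
  interpret e: mat_derivation \<epsilon> by (rule \<epsilon>)
  have dZ: "\<delta> Z \<in> carrier_mat m N" and eZ: "\<epsilon> Z \<in> carrier_mat m N"
    and dX: "\<delta> X \<in> carrier_mat N N"
    using Z X by (auto intro: d.carrier e.carrier)
  have "\<epsilon> Z * X + Z * (\<delta> X * P) = \<epsilon> (Z * X)"
    using e.leibniz[OF Z X] eX by simp
  also have "\<dots> = (\<delta> Z * X + Z * \<delta> X) * P"
    using eZX d.leibniz[OF Z X] by simp
  also have "\<dots> = \<delta> Z * X * P + Z * (\<delta> X * P)"
    using dZ X dX P Z by (simp add: add_mult_distrib_mat[of _ m N])
  finally have cancelled: "\<epsilon> Z * X = \<delta> Z * X * P"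
    by (rule add_right_cancel_mat[where r = m and c = N]) (use eZ X Z dX P dZ in auto)
  have "\<epsilon> Z = \<epsilon> Z * X * Xinv"
    using eZ X Xinv inv right_mult_one_mat[OF eZ] by simp
  also have "\<dots> = \<delta> Z * X * P * Xinv" unfolding cancelled ..
  also have "\<dots> = \<delta> Z * (X * P * Xinv)"
    using dZ X P Xinv by (simp add: assoc_mult_mat_dim carrier_matD)
  finally show ?thesis .
qed

(* With Z = U Y X^-1 the quotient rule gives eps Z = delta Z * X P X^-1, while the
   Sylvester equation gives V Z + R = X P X^-1; hence
   delta(Z V) (Z V) + delta(Z R V) = delta Z (V Z + R) V = eps Z V = eps(Z V). *)
lemma potential_equation_component:
  fixes \<delta> \<epsilon> :: "'b::ring_1 mat \<Rightarrow> 'b mat"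
  assumes \<delta>: "mat_derivation \<delta>" and \<epsilon>: "mat_derivation \<epsilon>"
    and P: "P \<in> carrier_mat N N" and R: "R \<in> carrier_mat N N"
    and U: "U \<in> carrier_mat n N'" and V: "V \<in> carrier_mat N n"
    and X: "X \<in> carrier_mat N N" and Y: "Y \<in> carrier_mat N' N"
    and const: "\<delta> R = 0\<^sub>m N N" "\<delta> U = 0\<^sub>m n N'" "\<epsilon> U = 0\<^sub>m n N'"
      "\<delta> V = 0\<^sub>m N n" "\<epsilon> V = 0\<^sub>m N n"
    and eX: "\<epsilon> X = \<delta> X * P" and eY: "\<epsilon> Y = \<delta> Y * P"
    and syl: "R * X - X * P = - ((V * U) * Y)"
    and Xinv: "Xinv \<in> carrier_mat N N" and inv: "X * Xinv = 1\<^sub>m N" "Xinv * X = 1\<^sub>m N"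
  shows "\<epsilon> (U * Y * Xinv * V) = \<delta> (U * Y * Xinv * V) * (U * Y * Xinv * V)
           + \<delta> (U * Y * Xinv * R * V)"
proof -
  interpret d: mat_derivation \<delta> by (rule \<delta>)
  interpret e: mat_derivation \<epsilon> by (rule \<epsilon>)
  define Z where "Z = U * Y * Xinv"
  have Z: "Z \<in> carrier_mat n N" unfolding Z_def using U Y Xinv by auto
  have dZ: "\<delta> Z \<in> carrier_mat n N" using Z by (rule d.carrier)
  have dY: "\<delta> Y \<in> carrier_mat N' N" using Y by (rule d.carrier)
  note dims = carrier_matD[OF P] carrier_matD[OF R] carrier_matD[OF U] carrier_matD[OF V]
    carrier_matD[OF X] carrier_matD[OF Y] carrier_matD[OF Xinv] carrier_matD[OF Z]
    carrier_matD[OF dZ] carrier_matD[OF dY]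
  have ZX: "Z * X = U * Y"
    unfolding Z_def using inv(2) by (simp add: assoc_mult_mat_dim dims)
  have eUY: "\<epsilon> (U * Y) = \<delta> (U * Y) * P"
    using e.const_left[OF U Y const(3)] d.const_left[OF U Y const(2)] eY
    by (simp add: assoc_mult_mat_dim dims)
  have eZ: "\<epsilon> Z = \<delta> Z * (X * P * Xinv)"
    by (rule right_quotient_rule[OF \<delta> \<epsilon> X Xinv inv(1) P Z eX]) (simp add: ZX eUY)
  have sylvester: "V * U * Y + R * X = X * P"
    by (rule diff_eq_uminus_imp_add_eq_mat[OF syl]) (use V U Y R X P in auto)
  have "V * Z + R = V * U * Y * Xinv + R * X * Xinv"
    unfolding Z_def using inv(1) by (simp add: assoc_mult_mat_dim dims)
  also have "\<dots> = (V * U * Y + R * X) * Xinv"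
    using V U Y R X Xinv by (simp add: add_mult_distrib_mat[of _ N N])
  finally have VZ: "V * Z + R = X * P * Xinv" unfolding sylvester .
  have "\<delta> (Z * V) * (Z * V) + \<delta> (Z * R * V) = \<delta> Z * (V * Z * V) + \<delta> Z * (R * V)"
    using d.const_right[OF Z V const(4)] d.const_right[OF Z R const(1)]
      d.const_right[OF _ V const(4), of "Z * R" n] Z R
    by (simp add: assoc_mult_mat_dim dims)
  also have "\<dots> = \<delta> Z * ((V * Z + R) * V)"
  proof -
    have VZ_R: "V * Z \<in> carrier_mat N N" "R * V \<in> carrier_mat N n" "V * Z * V \<in> carrier_mat N n"
      using V Z R by auto
    show ?thesis
      unfolding add_mult_distrib_mat[OF VZ_R(1) R V] mult_add_distrib_mat[OF dZ VZ_R(3,2)] ..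
  qed
  also have "\<dots> = \<epsilon> (Z * V)"
    unfolding VZ e.const_right[OF Z V const(5)] eZ
    using dZ X P Xinv V by (simp add: assoc_mult_mat_dim dims)
  finally show ?thesis unfolding Z_def by simp
qed

(* In any bidifferential calculus, dbar phi = (d phi) phi + d theta implies
   dbar d phi = d phi d phi: apply d, use d^2 = 0 and the Leibniz rule, then
   d dbar = - dbar d. *)
lemma dbar_d_of_potential:
  assumes calc: "bidiff_calculus emb d0 d1 db0 db1"
    and \<phi>: "\<phi> \<in> carrier_mat n n" and \<theta>: "\<theta> \<in> carrier_mat n n"
    and potential: "db0 \<phi> = add1 (rmul1 (d0 \<phi>) \<phi>) (d0 \<theta>)"
  shows "db1 (d0 \<phi>) = wedge (d0 \<phi>) (d0 \<phi>)"
proof -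
  note d = bidiff_calculus_parts(1)[OF calc] and db = bidiff_calculus_parts(2)[OF calc]
  note dd = bidiff_calculus_parts(3)[OF calc] and anti = bidiff_calculus_parts(4)[OF calc]
  note wf = graded_derivation_degree_one(1)[OF d]
    and d1_add = graded_derivation_degree_one(3)[OF d]
    and d1_rmul = graded_derivation_degree_one(4)[OF d]
    and db1_carrier = graded_derivation_degree_one(2)[OF db]
  have dims: "dim_row \<phi> = n" "dim_col \<phi> = n" "dim_row \<theta> = n" "dim_col \<theta> = n"
    using \<phi> \<theta> by auto
  have w\<phi>: "wf1 n n (d0 \<phi>)" and w\<theta>: "wf1 n n (d0 \<theta>)"
    using wf[of \<phi>] wf[of \<theta>] unfolding dims .
  have w\<phi>\<phi>: "wf1 n n (rmul1 (d0 \<phi>) \<phi>)"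
    using w\<phi> \<phi> unfolding wf1_def rmul1_def by auto
  define W where "W = wedge (d0 \<phi>) (d0 \<phi>)"
  have W: "W \<in> carrier_mat n n" using w\<phi> unfolding W_def wf1_def wedge_def by auto
  have "d1 (db0 \<phi>) = d1 (d0 \<phi>) * \<phi> - W + d1 (d0 \<theta>)"
    unfolding potential d1_add[OF w\<phi>\<phi> w\<theta>] d1_rmul[OF w\<phi> \<phi>] W_def ..
  also have "\<dots> = - W"
    unfolding dd dims using W \<phi> by (intro eq_matI) auto
  finally have "- W + db1 (d0 \<phi>) = 0\<^sub>m n n" using anti[of \<phi>] unfolding dims by simp
  then show ?thesis unfolding W_def[symmetric]
    by (rule uminus_add_eq_zero_mat) (use W db1_carrier[OF w\<phi>] in auto)
qed

theorem theorem1: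
  fixes emb :: "complex \<Rightarrow> 'b::ring_1"
    and d0 db0 :: "'b mat \<Rightarrow> 'b form1" and d1 db1 :: "'b form1 \<Rightarrow> 'b mat"
    and n N N' :: nat
    and P R X Xinv Y Ut Vt :: "'b mat"
  assumes alg: "complex_algebra emb"
    and calc: "bidiff_calculus emb d0 d1 db0 db1"
    and pos: "0 < n" "0 < N" "0 < N'"
    and dims: "P \<in> carrier_mat N N" "R \<in> carrier_mat N N" "Ut \<in> carrier_mat n N'"
      "Vt \<in> carrier_mat N n" "X \<in> carrier_mat N N" "Y \<in> carrier_mat N' N"
    and const: "d0 P = (0\<^sub>m N N, 0\<^sub>m N N)" "db0 P = (0\<^sub>m N N, 0\<^sub>m N N)"
      "d0 R = (0\<^sub>m N N, 0\<^sub>m N N)" "db0 R = (0\<^sub>m N N, 0\<^sub>m N N)"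
      "d0 Ut = (0\<^sub>m n N', 0\<^sub>m n N')" "db0 Ut = (0\<^sub>m n N', 0\<^sub>m n N')"
      "d0 Vt = (0\<^sub>m N n, 0\<^sub>m N n)" "db0 Vt = (0\<^sub>m N n, 0\<^sub>m N n)"
    and eqX: "db0 X = rmul1 (d0 X) P"
    and eqY: "db0 Y = rmul1 (d0 Y) P"
    and syl: "R * X - X * P = - ((Vt * Ut) * Y)"
    and inv: "Xinv \<in> carrier_mat N N" "X * Xinv = 1\<^sub>m N" "Xinv * X = 1\<^sub>m N"
  shows "db0 (Ut * Y * Xinv * Vt)
           = add1 (rmul1 (d0 (Ut * Y * Xinv * Vt)) (Ut * Y * Xinv * Vt))
                  (d0 (Ut * Y * Xinv * R * Vt))
       \<and> db1 (d0 (Ut * Y * Xinv * Vt))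
           = wedge (d0 (Ut * Y * Xinv * Vt)) (d0 (Ut * Y * Xinv * Vt))"
proof -
  note d = bidiff_calculus_parts(1)[OF calc] and db = bidiff_calculus_parts(2)[OF calc]
  define \<phi> where "\<phi> = Ut * Y * Xinv * Vt"
  define \<theta> where "\<theta> = Ut * Y * Xinv * R * Vt"
  have \<phi>: "\<phi> \<in> carrier_mat n n" and \<theta>: "\<theta> \<in> carrier_mat n n"
    unfolding \<phi>_def \<theta>_def using dims inv(1) by auto
  note fst_der = graded_derivation_components(1) and snd_der = graded_derivation_components(2)
  have "fst (db0 \<phi>) = fst (d0 \<phi>) * \<phi> + fst (d0 \<theta>)"
    unfolding \<phi>_def \<theta>_def
    by (rule potential_equation_component[OF fst_der[OF d] fst_der[OF db] dims _ _ _ _ _ _ _ syl inv])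
      (use const eqX eqY in \<open>simp_all add: rmul1_def\<close>)
  moreover have "snd (db0 \<phi>) = snd (d0 \<phi>) * \<phi> + snd (d0 \<theta>)"
    unfolding \<phi>_def \<theta>_def
    by (rule potential_equation_component[OF snd_der[OF d] snd_der[OF db] dims _ _ _ _ _ _ _ syl inv])
      (use const eqX eqY in \<open>simp_all add: rmul1_def\<close>)
  ultimately have potential: "db0 \<phi> = add1 (rmul1 (d0 \<phi>) \<phi>) (d0 \<theta>)"
    by (simp add: prod_eq_iff add1_def rmul1_def)
  show ?thesis
    using potential dbar_d_of_potential[OF calc \<phi> \<theta> potential]
    unfolding \<phi>_def \<theta>_def by simp
qed

end
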